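(* Let $V$ be a set and $(\mathcal{H}_\ell)_{\ell\in\mathbb{Z}}$ a hypergraph chain over $V$ with Helly Number $h$ and Colorful Helly Number $k$. Then for every $\ell\in\mathbb{Z}$ and every finite subset $S\subset V$: (a) $\left|\binom{S}{k}\setminus\mathcal{H}_\ell\right|\ge\binom{\frac1k\left(|S|-\omega_k(\mathcal{H}_{\ell+1}|_S)\right)}{k}$, and (b) $\left|\binom{S}{h}\setminus\mathcal{H}_\ell\right|\ge\binom{k}{h}^{-1}\binom{\frac1h\left(|S|-\omega_h(\mathcal{H}_{\ell+2}|_S)\right)}{h}$.
   Context: A hypergraph on $V$ is a family $\mathcal{H}\subset 2^V$; it is downwards closed if $H\in\mathcal{H}$, $G\subset H$ imply $G\in\mathcal{H}$. A hypergraph chain over $V$ is a sequence $(\mathcal{H}_\ell)_{\ell\in\mathbb{Z}}$ of downwards closed hypergraphs on $V$ with $\mathcal{H}_\ell\subset\mathcal{H}_{\ell+1}$. It has Helly Number $h$ if for every $\ell$ and every $S\subseteq V$, $\binom{S}{h}\subset\mathcal{H}_\ell$ implies $S\in\mathcal{H}_{\ell+1}$, where $\binom{S}{h}$ is the set of $h$-element subsets of $S$. For $S_1,\dots,S_k\subset V$, $F\subset V$ is a colorful selection if there is a surjection $\phi:\{1,\dots,k\}\to F$ with $\phi(i)\in S_i$; these form $S_1\otimes\dots\otimes S_k$. The chain has Colorful Helly Number $k$ if for all finite $S_1,\dots,S_k\subset V$ and $\ell$ with $S_1\otimes\dots\otimes S_k\subset\mathcal{H}_\ell$, some $S_j\in\mathcal{H}_{\ell+1}$.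 For a hypergraph $\mathcal{H}$ and finite $S$, $\omega_h(\mathcal{H}|_S)$ denotes the largest size of a subset $K\subset S$ with $\binom{K}{h}\subset\mathcal{H}$. For real $x$ and integer $m\ge0$, $\binom{x}{m}$ denotes $x(x-1)\cdots(x-m+1)/m!$. *)

theory Defs
  imports Complex_Main
begin

definition ksubsets :: "'a set \<Rightarrow> nat \<Rightarrow> 'a set set" where
  "ksubsets S h = {G. G \<subseteq> S \<and> card G = h}"

definition downwards_closed :: "'a set set \<Rightarrow> bool" where
  "downwards_closed \<H> \<longleftrightarrow> (\<forall>H G. H \<in> \<H> \<longrightarrow> G \<subseteq> H \<longrightarrow> G \<in> \<H>)"

definition hypergraph_chain :: "'a set \<Rightarrow> (int \<Rightarrow> 'a set set) \<Rightarrow> bool" where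
  "hypergraph_chain V \<H> \<longleftrightarrow>
     (\<forall>l. \<H> l \<subseteq> Pow V \<and> downwards_closed (\<H> l) \<and> \<H> l \<subseteq> \<H> (l + 1))"

definition helly_number :: "'a set \<Rightarrow> (int \<Rightarrow> 'a set set) \<Rightarrow> nat \<Rightarrow> bool" where
  "helly_number V \<H> h \<longleftrightarrow>
     (\<forall>l S. S \<subseteq> V \<longrightarrow> ksubsets S h \<subseteq> \<H> l \<longrightarrow> S \<in> \<H> (l + 1))"

definition colorful_selection :: "nat \<Rightarrow> (nat \<Rightarrow> 'a set) \<Rightarrow> 'a set \<Rightarrow> bool" where
  "colorful_selection k Ss F \<longleftrightarrow>
     (\<exists>\<phi>. \<phi> ` {1..k} = F \<and> (\<forall>i\<in>{1..k}. \<phi> i \<in> Ss i))"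

definition colorful_helly_number :: "'a set \<Rightarrow> (int \<Rightarrow> 'a set set) \<Rightarrow> nat \<Rightarrow> bool" where
  "colorful_helly_number V \<H> k \<longleftrightarrow>
     (\<forall>Ss l. (\<forall>i\<in>{1..k}. finite (Ss i) \<and> Ss i \<subseteq> V) \<longrightarrow>
        {F. colorful_selection k Ss F} \<subseteq> \<H> l \<longrightarrow> (\<exists>j\<in>{1..k}. Ss j \<in> \<H> (l + 1)))"

definition omega :: "nat \<Rightarrow> 'a set set \<Rightarrow> 'a set \<Rightarrow> nat" where
  "omega h \<H> S = Max {card K | K. K \<subseteq> S \<and> ksubsets K h \<subseteq> \<H>}"

end

(* Pack S greedily with pairwise disjoint h-sets outside the larger hypergraph K = H_(l+m); the
   uncovered rest of S has all its h-subsets in K, so the packing has r >= (|S| - omega)/h members.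
   Any k members of the packing, used as colour classes, have by the colorful Helly property a
   selection outside H_(l+m-1); it meets each of them in exactly one point.  For (a), h = k and the
   selection itself is the non-edge of H_l; for (b) the Helly property yields an h-subset of it outside
   H_l.  Such an h-set determines the h members it meets, so it arises from at most C(r-h, k-h) of the
   C(r, k) choices of k members, whence C(r, h) <= c C(k, h) for the number c of non-edges.  Finally
   C(x, h) <= C(r, h) for h <= x <= r, and |C(x, h)| <= 1 for 0 <= x <= h. *)

theory Submission
  imports Defs
begin

lemma abs_gbinomial_le_one:
  fixes x :: real
  assumes "0 \<le> x" "x \<le> real n"
  shows "\<bar>x gchoose n\<bar> \<le> 1"
  using assms
proof (induction n arbitrary: x)
  case 0
  then show ?case by simp
next
  case (Suc n)
  have "real (Suc n) * \<bar>x gchoose Suc n\<bar> \<le> real (Suc n) * 1"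
  proof (cases "x \<le> real n")
    case True
    have "real (Suc n) * (x gchoose Suc n) = (x - real n) * (x gchoose n)"
      using gbinomial_mult_1[of x n] by (simp add: algebra_simps)
    then have "real (Suc n) * \<bar>x gchoose Suc n\<bar> = \<bar>x - real n\<bar> * \<bar>x gchoose n\<bar>"
      by (metis abs_mult abs_of_nat)
    also have "\<dots> \<le> real (Suc n) * 1"
      using Suc True by (intro mult_mono) auto
    finally show ?thesis .
  next
    case False
    have "real (Suc n) * \<bar>x gchoose Suc n\<bar> = \<bar>x\<bar> * \<bar>(x - 1) gchoose n\<bar>"
      by (metis gbinomial_absorption abs_mult abs_of_nat)
    also have "\<dots> \<le> real (Suc n) * 1"
    proof (intro mult_mono)
      show "\<bar>(x - 1) gchoose n\<bar> \<le> 1"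
        using Suc.IH[of "x - 1"] Suc.prems False by (cases "n = 0") auto
    qed (use Suc.prems in auto)
    finally show ?thesis .
  qed
  then show ?case by simp
qed

lemma binomial_le_of_double_count:
  fixes r c h k :: nat
  assumes "h \<le> k" "1 \<le> r" "r \<le> c" "r choose k \<le> c * ((r - h) choose (k - h))"
  shows "r choose h \<le> c * (k choose h)"
proof (cases "k \<le> r")
  case True
  have "(r choose h) * ((r - h) choose (k - h)) = (r choose k) * (k choose h)"
    using choose_mult[OF assms(1) True] by simp
  also have "\<dots> \<le> c * (k choose h) * ((r - h) choose (k - h))"
    using assms(4) by simp
  finally show ?thesis
    using True assms(1) by simp
next
  case False
  then have "r choose h \<le> k choose h"
    by (intro binomial_right_mono) simp
  also have "\<dots> \<le> c * (k choose h)"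
    using assms(2,3) by simp
  finally show ?thesis .
qed

lemma gbinomial_le_of_double_count:
  fixes x :: real and r c h k :: nat
  assumes "0 \<le> x" "x \<le> real r" "1 \<le> h" "h \<le> k" "r \<le> c"
    and "r choose k \<le> c * ((r - h) choose (k - h))"
  shows "x gchoose h \<le> real (c * (k choose h))"
proof (cases "x \<le> real h")
  case True
  show ?thesis
  proof (cases "r = 0")
    case True
    then show ?thesis
      using assms(1-3) by (simp add: gbinomial_0_left)
  next
    case False
    then have "1 \<le> c * (k choose h)"
      using assms(4,5) by (simp add: Suc_le_eq)
    moreover have "\<bar>x gchoose h\<bar> \<le> 1"
      using abs_gbinomial_le_one assms(1) True by blast
    ultimately show ?thesis by linarith
  qed
next
  case False
  then have "x gchoose h \<le> real r gchoose h"
    using gbinomial_mono assms(2) by simp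
  also have "\<dots> = real (r choose h)"
    by (simp add: binomial_gbinomial)
  also have "\<dots> \<le> real (c * (k choose h))"
  proof -
    have "h < r"
      using assms(2) False by linarith
    then show ?thesis
      using binomial_le_of_double_count[of h k r c] assms(3-6) by (simp only: of_nat_le_iff)
  qed
  finally show ?thesis .
qed

lemma finite_ksubsets: "finite S \<Longrightarrow> finite (ksubsets S s)"
  unfolding ksubsets_def by (rule finite_subset[of _ "Pow S"]) auto

lemma card_ksubsets: "finite S \<Longrightarrow> card (ksubsets S s) = card S choose s"
  unfolding ksubsets_def by (rule n_subsets)

lemma card_ksubsets_containing:
  assumes "finite X" "J \<subseteq> X"
  shows "card {T \<in> ksubsets X k. J \<subseteq> T} \<le> (card X - card J) choose (k - card J)"
proof -
  have finJ: "finite J"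
    using assms finite_subset by blast
  have "inj_on (\<lambda>T. T - J) {T \<in> ksubsets X k. J \<subseteq> T}"
    by (rule inj_onI) blast
  moreover have "(\<lambda>T. T - J) ` {T \<in> ksubsets X k. J \<subseteq> T} \<subseteq> ksubsets (X - J) (k - card J)"
    unfolding ksubsets_def using card_Diff_subset[OF finJ] by auto
  ultimately have "card {T \<in> ksubsets X k. J \<subseteq> T} \<le> card (ksubsets (X - J) (k - card J))"
    by (rule card_inj_on_le) (simp add: finite_ksubsets assms(1))
  also have "\<dots> = (card X - card J) choose (k - card J)"
    using assms by (simp add: card_ksubsets card_Diff_subset finJ)
  finally show ?thesis .
qed

lemma finite_omega_candidates:
  "finite S \<Longrightarrow> finite {card K | K. K \<subseteq> S \<and> ksubsets K s \<subseteq> \<K>}"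
  by (rule finite_subset[of _ "card ` Pow S"]) auto

lemma card_le_omega:
  assumes "finite S" "K \<subseteq> S" "ksubsets K s \<subseteq> \<K>"
  shows "card K \<le> omega s \<K> S"
  unfolding omega_def using assms finite_omega_candidates by (intro Max_ge) auto

lemma omega_le_card:
  assumes "finite S" "1 \<le> s"
  shows "omega s \<K> S \<le> card S"
proof -
  have "ksubsets {} s = {}"
    using assms(2) by (auto simp: ksubsets_def)
  then have "0 \<in> {card K | K. K \<subseteq> S \<and> ksubsets K s \<subseteq> \<K>}"
    by (intro CollectI exI[of _ "{}"]) auto
  then show ?thesis
    unfolding omega_def using assms(1) finite_omega_candidates
    by (subst Max_le_iff) (auto intro: card_mono)
qed

lemma hypergraph_chain_mono:
  assumes "hypergraph_chain V \<H>" "l \<le> m"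
  shows "\<H> l \<subseteq> \<H> m"
  using assms(2)
proof (induction m rule: int_ge_induct)
  case (step m)
  then show ?case
    using assms(1) unfolding hypergraph_chain_def by blast
qed simp

lemma exists_maximal_disjoint_packing:
  assumes "finite S" "1 \<le> s"
  shows "\<exists>\<G> \<subseteq> ksubsets S s - \<K>. pairwise disjnt \<G> \<and> ksubsets (S - \<Union>\<G>) s \<subseteq> \<K>"
  using assms(1)
proof (induction S rule: finite_psubset_induct)
  case (psubset S)
  show ?case
  proof (cases "ksubsets S s \<subseteq> \<K>")
    case True
    then show ?thesis
      by (intro exI[of _ "{}"]) auto
  next
    case False
    then obtain G where G: "G \<in> ksubsets S s" "G \<notin> \<K>"
      by blast
    then have "G \<subseteq> S" "G \<noteq> {}"
      using assms(2) by (auto simp: ksubsets_def)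
    then obtain \<G> where \<G>: "\<G> \<subseteq> ksubsets (S - G) s - \<K>" "pairwise disjnt \<G>"
      "ksubsets (S - G - \<Union>\<G>) s \<subseteq> \<K>"
      using psubset.IH[of "S - G"] by blast
    have "insert G \<G> \<subseteq> ksubsets S s - \<K>"
      using \<G>(1) G by (auto simp: ksubsets_def)
    moreover have "pairwise disjnt (insert G \<G>)"
      using \<G>(1,2) by (auto simp: pairwise_insert disjnt_def ksubsets_def)
    moreover have "S - \<Union>(insert G \<G>) = S - G - \<Union>\<G>"
      by blast
    ultimately show ?thesis
      using \<G>(3) by metis
  qed
qed

text \<open>The finiteness conjunct keeps \<open>card (E \<inter> G) \<le> 1\<close> from holding vacuously for infinite \<open>E \<inter> G\<close>.\<close>
definition partial_transversal :: "'a set set \<Rightarrow> 'a set \<Rightarrow> bool" where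
  "partial_transversal \<T> E \<longleftrightarrow> finite E \<and> E \<subseteq> \<Union>\<T> \<and> (\<forall>G \<in> \<T>. card (E \<inter> G) \<le> 1)"

lemma partial_transversal_subset:
  assumes "partial_transversal \<T> F" "E \<subseteq> F"
  shows "partial_transversal \<T> E"
  unfolding partial_transversal_def
proof (intro conjI ballI)
  show "finite E" "E \<subseteq> \<Union>\<T>"
    using assms finite_subset unfolding partial_transversal_def by blast+
  fix G
  assume "G \<in> \<T>"
  then have "card (F \<inter> G) \<le> 1" "finite (F \<inter> G)"
    using assms(1) unfolding partial_transversal_def by auto
  moreover have "card (E \<inter> G) \<le> card (F \<inter> G)"
    using calculation(2) assms(2) by (intro card_mono) auto
  ultimately show "card (E \<inter> G) \<le> 1"
    by linarith
qed

lemma members_meeting_partial_transversal: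
  assumes "pairwise disjnt \<G>" "\<T> \<subseteq> \<G>" "partial_transversal \<T> E"
  shows "{G \<in> \<G>. E \<inter> G \<noteq> {}} = {G \<in> \<T>. E \<inter> G \<noteq> {}}"
proof (intro equalityI subsetI)
  fix G
  assume "G \<in> {G \<in> \<G>. E \<inter> G \<noteq> {}}"
  then obtain x where x: "G \<in> \<G>" "x \<in> E" "x \<in> G"
    by blast
  then obtain G' where "G' \<in> \<T>" "x \<in> G'"
    using assms(3) unfolding partial_transversal_def by blast
  moreover have "G = G'"
    using assms(1,2) x calculation unfolding pairwise_def disjnt_def by blast
  ultimately show "G \<in> {G \<in> \<T>. E \<inter> G \<noteq> {}}"
    using x by blast
qed (use assms(2) in blast)

lemma card_partial_transversal:
  assumes "pairwise disjnt \<T>" "finite \<T>" "partial_transversal \<T> E"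
  shows "card E = card {G \<in> \<T>. E \<inter> G \<noteq> {}}"
proof -
  let ?I = "{G \<in> \<T>. E \<inter> G \<noteq> {}}"
  have fin: "finite E" and cover: "E \<subseteq> \<Union>\<T>" and le1: "\<And>G. G \<in> \<T> \<Longrightarrow> card (E \<inter> G) \<le> 1"
    using assms(3) unfolding partial_transversal_def by auto
  have "E = (\<Union>G \<in> ?I. E \<inter> G)"
    using cover by blast
  also have "card \<dots> = (\<Sum>G \<in> ?I. card (E \<inter> G))"
  proof (rule card_UN_disjoint)
    show "\<forall>G\<in>?I. \<forall>G'\<in>?I. G \<noteq> G' \<longrightarrow> E \<inter> G \<inter> (E \<inter> G') = {}"
      using assms(1) unfolding pairwise_def disjnt_def by blast
  qed (use assms(2) fin in auto)
  also have "\<dots> = (\<Sum>G \<in> ?I. 1)"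
    using le1 fin by (intro sum.cong) (auto simp: le_Suc_eq)
  finally show ?thesis
    by simp
qed

lemma binomial_le_card_partial_transversals:
  assumes "finite \<G>" "pairwise disjnt \<G>" "finite \<E>" "\<And>E. E \<in> \<E> \<Longrightarrow> card E = h"
    and witness: "\<And>\<T>. \<T> \<in> ksubsets \<G> k \<Longrightarrow> \<exists>E \<in> \<E>. partial_transversal \<T> E"
  shows "card \<G> choose k \<le> card \<E> * ((card \<G> - h) choose (k - h))"
proof -
  define W where "W E = {\<T> \<in> ksubsets \<G> k. partial_transversal \<T> E}" for E
  have fiber: "card (W E) \<le> (card \<G> - h) choose (k - h)" if "E \<in> \<E>" for E
  proof (cases "W E = {}")
    case False
    then obtain \<T> where \<T>: "\<T> \<subseteq> \<G>" "partial_transversal \<T> E"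
      unfolding W_def ksubsets_def by blast
    let ?J = "{G \<in> \<G>. E \<inter> G \<noteq> {}}"
    have "card E = card ?J"
      using card_partial_transversal[OF pairwise_subset[OF assms(2) \<T>(1)] _ \<T>(2)]
        members_meeting_partial_transversal[OF assms(2) \<T>] finite_subset[OF \<T>(1) assms(1)]
      by simp
    then have "card ?J = h"
      using assms(4) that by simp
    have "W E \<subseteq> {\<T> \<in> ksubsets \<G> k. ?J \<subseteq> \<T>}"
      using members_meeting_partial_transversal[OF assms(2)] unfolding W_def ksubsets_def by blast
    then have "card (W E) \<le> card {\<T> \<in> ksubsets \<G> k. ?J \<subseteq> \<T>}"
      using finite_ksubsets[OF assms(1), of k] by (intro card_mono) auto
    also have "\<dots> \<le> (card \<G> - h) choose (k - h)"
      using card_ksubsets_containing[of \<G> ?J k] assms(1) \<open>card ?J = h\<close> by auto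
    finally show ?thesis .
  qed simp
  have "ksubsets \<G> k = (\<Union>E \<in> \<E>. W E)"
    using witness unfolding W_def by blast
  then have "card \<G> choose k = card (\<Union>E \<in> \<E>. W E)"
    using card_ksubsets assms(1) by metis
  also have "\<dots> \<le> (\<Sum>E \<in> \<E>. card (W E))"
    by (rule card_UN_le[OF assms(3)])
  also have "\<dots> \<le> (\<Sum>E \<in> \<E>. (card \<G> - h) choose (k - h))"
    using fiber by (rule sum_mono)
  finally show ?thesis
    by simp
qed

lemma colorful_helly_transversal:
  assumes "colorful_helly_number V \<H> k" "finite S" "S \<subseteq> V"
    and "\<T> \<subseteq> Pow S - \<H> (l + 1)" "pairwise disjnt \<T>" "card \<T> = k"
  shows "\<exists>F. F \<notin> \<H> l \<and> card F = k \<and> partial_transversal \<T> F"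
proof -
  have "finite \<T>"
    using assms(2,4) finite_subset[of \<T> "Pow S"] by blast
  then obtain f where f: "bij_betw f {1..k} \<T>"
    using finite_same_card_bij[of "{1..k}" \<T>] assms(6) by auto
  have f_in: "f i \<in> \<T>" if "i \<in> {1..k}" for i
    using f that by (rule bij_betw_apply)
  have colors: "f i \<subseteq> S" "f i \<notin> \<H> (l + 1)" if "i \<in> {1..k}" for i
    using assms(4) f_in[OF that] by auto
  have "\<not> {F. colorful_selection k f F} \<subseteq> \<H> l"
  proof
    assume "{F. colorful_selection k f F} \<subseteq> \<H> l"
    moreover have "\<forall>i\<in>{1..k}. finite (f i) \<and> f i \<subseteq> V"
      using colors assms(2,3) finite_subset by blast
    ultimately show False
      using assms(1) colors(2) unfolding colorful_helly_number_def by blast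
  qed
  then obtain \<phi> where F: "\<phi> ` {1..k} \<notin> \<H> l" and \<phi>: "\<And>i. i \<in> {1..k} \<Longrightarrow> \<phi> i \<in> f i"
    unfolding colorful_selection_def by blast
  have own_color: "i = j" if "i \<in> {1..k}" "j \<in> {1..k}" "\<phi> j \<in> f i" for i j
  proof (rule ccontr)
    assume "i \<noteq> j"
    then have "f i \<noteq> f j"
      using f that(1,2) by (metis bij_betw_imp_inj_on inj_onD)
    then have "disjnt (f i) (f j)"
      using assms(5) f_in that(1,2) unfolding pairwise_def by metis
    then show False
      using \<phi> that by (auto simp: disjnt_def)
  qed
  have "inj_on \<phi> {1..k}"
    using own_color \<phi> by (metis inj_onI)
  then have "card (\<phi> ` {1..k}) = k"
    by (simp add: card_image)
  moreover have "partial_transversal \<T> (\<phi> ` {1..k})"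
    unfolding partial_transversal_def
  proof (intro conjI ballI)
    show "\<phi> ` {1..k} \<subseteq> \<Union>\<T>"
      using \<phi> f_in by blast
    fix G
    assume "G \<in> \<T>"
    then obtain i where i: "i \<in> {1..k}" "G = f i"
      using f bij_betw_imp_surj_on by blast
    then have "\<phi> ` {1..k} \<inter> G = {\<phi> i}"
      using own_color[OF i(1)] \<phi> by blast
    then show "card (\<phi> ` {1..k} \<inter> G) \<le> 1"
      by simp
  qed simp
  ultimately show ?thesis
    using F by blast
qed

lemma helly_transversal:
  assumes "colorful_helly_number V \<H> k" "helly_number V \<H> h" "finite S" "S \<subseteq> V"
    and "\<T> \<subseteq> Pow S - \<H> (l + 2)" "pairwise disjnt \<T>" "card \<T> = k"
  shows "\<exists>E. E \<notin> \<H> l \<and> card E = h \<and> partial_transversal \<T> E"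
proof -
  obtain F where F: "F \<notin> \<H> (l + 1)" "partial_transversal \<T> F"
    using colorful_helly_transversal[OF assms(1,3,4), of \<T> "l + 1"] assms(5-7)
    by (auto simp: add.assoc)
  have "F \<subseteq> V"
    using F(2) assms(4,5) unfolding partial_transversal_def by blast
  then have "\<not> ksubsets F h \<subseteq> \<H> l"
    using assms(2) F(1) unfolding helly_number_def by blast
  then obtain E where "E \<subseteq> F" "card E = h" "E \<notin> \<H> l"
    unfolding ksubsets_def by blast
  then show ?thesis
    using partial_transversal_subset[OF F(2)] by blast
qed

lemma gbinomial_le_card_non_edges:
  fixes \<K> \<L> :: "'a set set"
  assumes "finite S" "1 \<le> h" "h \<le> k" "\<L> \<subseteq> \<K>"
    and witness: "\<And>\<T>. \<T> \<subseteq> Pow S - \<K> \<Longrightarrow> pairwise disjnt \<T> \<Longrightarrow> card \<T> = k \<Longrightarrow>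
      \<exists>E. E \<notin> \<L> \<and> card E = h \<and> partial_transversal \<T> E"
  shows "(real (card S) - real (omega h \<K> S)) / real h gchoose h
    \<le> real (card (ksubsets S h - \<L>) * (k choose h))"
proof -
  let ?\<E> = "ksubsets S h - \<L>"
  obtain \<G> where \<G>: "\<G> \<subseteq> ksubsets S h - \<K>" "pairwise disjnt \<G>" "ksubsets (S - \<Union>\<G>) h \<subseteq> \<K>"
    using exists_maximal_disjoint_packing[OF assms(1,2), of \<K>] by auto
  have fin\<G>: "finite \<G>"
    using \<G>(1) finite_ksubsets[OF assms(1)] finite_subset by blast
  have union: "\<Union>\<G> \<subseteq> S" and members: "\<forall>G \<in> \<G>. card G = h \<and> finite G"
    using \<G>(1) unfolding ksubsets_def by (auto intro: rev_finite_subset[OF assms(1)])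
  have "card (\<Union>\<G>) = h * card \<G>"
    using card_Union_disjoint[OF \<G>(2)] members by simp
  then have "card S = card (S - \<Union>\<G>) + h * card \<G>"
    using card_Diff_subset[OF rev_finite_subset[OF assms(1) union] union]
      card_mono[OF assms(1) union] by simp
  moreover have "card (S - \<Union>\<G>) \<le> omega h \<K> S"
    using \<G>(3) by (intro card_le_omega[OF assms(1)]) auto
  ultimately have "real (card S) - real (omega h \<K> S) \<le> real h * real (card \<G>)"
    by (simp flip: of_nat_mult)
  then have x_le: "(real (card S) - real (omega h \<K> S)) / real h \<le> real (card \<G>)"
    using assms(2) by (simp add: divide_le_eq mult.commute)
  have x_ge: "0 \<le> (real (card S) - real (omega h \<K> S)) / real h"
    using omega_le_card[OF assms(1,2)] by simp
  have "card \<G> \<le> card ?\<E>"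
    using \<G>(1) assms(4) finite_ksubsets[OF assms(1)] by (intro card_mono) auto
  moreover have "card \<G> choose k \<le> card ?\<E> * ((card \<G> - h) choose (k - h))"
  proof (rule binomial_le_card_partial_transversals[OF fin\<G> \<G>(2)])
    show "finite ?\<E>" "\<And>E. E \<in> ?\<E> \<Longrightarrow> card E = h"
      using finite_ksubsets[OF assms(1)] by (auto simp: ksubsets_def)
    fix \<T>
    assume "\<T> \<in> ksubsets \<G> k"
    then have \<T>: "\<T> \<subseteq> Pow S - \<K>" "pairwise disjnt \<T>" "card \<T> = k"
      using \<G>(1,2) pairwise_subset by (auto simp: ksubsets_def)
    then obtain E where "E \<notin> \<L>" "card E = h" "partial_transversal \<T> E"
      using witness by blast
    moreover have "E \<subseteq> S"
      using calculation(3) \<T>(1) unfolding partial_transversal_def by blast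
    ultimately show "\<exists>E \<in> ?\<E>. partial_transversal \<T> E"
      unfolding ksubsets_def by blast
  qed
  ultimately show ?thesis
    using gbinomial_le_of_double_count[OF x_ge x_le assms(2,3)] by blast
qed

theorem lemma1:
  fixes V :: "'a set" and \<H> :: "int \<Rightarrow> 'a set set" and h k :: nat
  assumes "hypergraph_chain V \<H>"
    and "h \<ge> 1" and "k \<ge> 1"
    and "helly_number V \<H> h"
    and "colorful_helly_number V \<H> k"
  shows "\<forall>l S. finite S \<and> S \<subseteq> V \<longrightarrow>
      real (card (ksubsets S k - \<H> l))
        \<ge> ((real (card S) - real (omega k (\<H> (l + 1)) S)) / real k) gchoose k
    \<and> real (card (ksubsets S h - \<H> l))
        \<ge> (((real (card S) - real (omega h (\<H> (l + 2)) S)) / real h) gchoose h)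
             / real (k choose h)"
proof (intro allI impI conjI)
  fix l S
  assume S: "finite S \<and> S \<subseteq> V"
  have chain: "\<H> l \<subseteq> \<H> (l + 1)" "\<H> l \<subseteq> \<H> (l + 2)"
    using hypergraph_chain_mono[OF assms(1)] by auto
  have "(real (card S) - real (omega k (\<H> (l + 1)) S)) / real k gchoose k
      \<le> real (card (ksubsets S k - \<H> l) * (k choose k))"
    using S assms(3) chain colorful_helly_transversal[OF assms(5)]
    by (intro gbinomial_le_card_non_edges) auto
  then show "real (card (ksubsets S k - \<H> l))
      \<ge> ((real (card S) - real (omega k (\<H> (l + 1)) S)) / real k) gchoose k"
    by simp
  show "real (card (ksubsets S h - \<H> l))
      \<ge> (((real (card S) - real (omega h (\<H> (l + 2)) S)) / real h) gchoose h) / real (k choose h)"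
  proof (cases "h \<le> k")
    case True
    have "(real (card S) - real (omega h (\<H> (l + 2)) S)) / real h gchoose h
        \<le> real (card (ksubsets S h - \<H> l) * (k choose h))"
      using S assms(2) True chain helly_transversal[OF assms(5,4)]
      by (intro gbinomial_le_card_non_edges) auto
    then show ?thesis
      using True by (simp add: divide_le_eq)
  qed (simp add: binomial_eq_0)
qed

end
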